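(* If $G=(V,E)$ is a finite bipartite graph, then with $\mathbf{x}(z)$ defined from the LABP limits as below, $$\lim_{z\to\infty}\sum_{e\in E}x_e(z)=\nu(G)=\tau(G),$$ i.e. LABP computes the matching number, which equals the vertex cover number.
   Context: $\vec E$ denotes the directed edges of $G$, $\partial u$ the neighbours of $u$, empty sums are $0$. LABP: $m^0_{\vec e}(z)=0$, $m^{t+1}_{u\to v}(z)=z/(1+\sum_{w\in\partial u\setminus v}m^t_{w\to u}(z))$; $Y_{\vec e}(z)=\lim_t m^t_{\vec e}(z)$; $x_e(z)=Y_{\vec e}(z)Y_{-\vec e}(z)/(z+Y_{\vec e}(z)Y_{-\vec e}(z))$ for either orientation $\vec e$ of $e$. $\nu(G)$ is the maximum size of a matching and $\tau(G)$ the minimum size of a vertex cover. *)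

theory Defs
  imports Complex_Main
begin

definition simple_graph :: "'a set \<Rightarrow> 'a set set \<Rightarrow> bool" where
  "simple_graph V E \<longleftrightarrow> finite V \<and>
     (\<forall>e\<in>E. \<exists>u v. u \<in> V \<and> v \<in> V \<and> u \<noteq> v \<and> e = {u, v})"

definition bipartite :: "'a set \<Rightarrow> 'a set set \<Rightarrow> bool" where
  "bipartite V E \<longleftrightarrow> (\<exists>A B. A \<union> B = V \<and> A \<inter> B = {} \<and>
     (\<forall>e\<in>E. \<exists>a\<in>A. \<exists>b\<in>B. e = {a, b}))"

definition nbrs :: "'a set set \<Rightarrow> 'a \<Rightarrow> 'a set" where
  "nbrs E u = {w. {u, w} \<in> E}"

definition dir_edges :: "'a set set \<Rightarrow> ('a \<times> 'a) set" where
  "dir_edges E = {(u, v). {u, v} \<in> E}"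

definition is_matching :: "'a set set \<Rightarrow> 'a set set \<Rightarrow> bool" where
  "is_matching E M \<longleftrightarrow> M \<subseteq> E \<and> (\<forall>e\<in>M. \<forall>f\<in>M. e \<noteq> f \<longrightarrow> e \<inter> f = {})"

definition matching_number :: "'a set set \<Rightarrow> nat" where
  "matching_number E = Max {card M | M. is_matching E M}"

definition is_vertex_cover :: "'a set \<Rightarrow> 'a set set \<Rightarrow> 'a set \<Rightarrow> bool" where
  "is_vertex_cover V E C \<longleftrightarrow> C \<subseteq> V \<and> (\<forall>e\<in>E. e \<inter> C \<noteq> {})"

definition vertex_cover_number :: "'a set \<Rightarrow> 'a set set \<Rightarrow> nat" where
  "vertex_cover_number V E = Min {card C | C. is_vertex_cover V E C}"

text \<open>LABP messages: labp_msg E t z u v is m^t_{u->v}(z).\<close>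
primrec labp_msg :: "'a set set \<Rightarrow> nat \<Rightarrow> real \<Rightarrow> 'a \<Rightarrow> 'a \<Rightarrow> real" where
  "labp_msg E 0 z u v = 0"
| "labp_msg E (Suc t) z u v =
     z / (1 + (\<Sum>w\<in>nbrs E u - {v}. labp_msg E t z w u))"

definition labp_Y :: "'a set set \<Rightarrow> real \<Rightarrow> 'a \<Rightarrow> 'a \<Rightarrow> real" where
  "labp_Y E z u v = lim (\<lambda>t. labp_msg E t z u v)"

definition labp_x_dir :: "'a set set \<Rightarrow> real \<Rightarrow> 'a \<Rightarrow> 'a \<Rightarrow> real" where
  "labp_x_dir E z u v =
     labp_Y E z u v * labp_Y E z v u / (z + labp_Y E z u v * labp_Y E z v u)"

definition labp_x :: "'a set set \<Rightarrow> real \<Rightarrow> 'a set \<Rightarrow> real" where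
  "labp_x E z e = (case (SOME p. e = {fst p, snd p}) of (u, v) \<Rightarrow> labp_x_dir E z u v)"

end

theory Submission
  imports Defs "HOL-Analysis.Infinite_Products" "HOL-Probability.Characteristic_Functions"
begin

text \<open>For z > 0 the LABP update is antitone and maps nonnegative messages into [0, z], so the
  even and the odd iterates are monotone and converge; at a directed edge where the ratio of the
  two limits is extremal, the fixed point equations force this ratio to be 1. Hence the messages
  converge to a positive fixed point Y, and in terms of Y the weights x(e) lie in (0, 1), satisfy
  \<Sum>{x(e) | v \<in> e} = 1 - P(v) with P(v) > 0, and x(e) (1 - x(e)) = z P(u) P(v) for e = {u, v}.
  The first relation bounds \<Sum> x(e) by the size of every vertex cover. Taking logarithms in the
  second and comparing with a maximum matching M and a vertex cover made of one endpoint of each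
  edge of M (Koenig's theorem) gives ln z (\<Sum> x(e) - |M|) \<ge> -(|E| + |V|).\<close>

section \<open>Koenig's theorem\<close>

definition bipartite_on :: "'a set \<Rightarrow> 'a set \<Rightarrow> 'a set set \<Rightarrow> bool" where
  "bipartite_on A B E \<longleftrightarrow> (\<forall>e\<in>E. \<exists>a\<in>A. \<exists>b\<in>B. e = {a, b})"

definition edges_within :: "'a set set \<Rightarrow> 'a set \<Rightarrow> 'a set set" where
  "edges_within E S = {e\<in>E. e \<subseteq> S}"

definition neighbours_in :: "'a set set \<Rightarrow> 'a set \<Rightarrow> 'a set \<Rightarrow> 'a set" where
  "neighbours_in E B X = {b\<in>B. \<exists>a\<in>X. {a, b} \<in> E}"

definition hall_with_deficiency :: "'a set set \<Rightarrow> 'a set \<Rightarrow> 'a set \<Rightarrow> nat \<Rightarrow> bool" where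
  "hall_with_deficiency E A B d \<longleftrightarrow> (\<forall>X\<subseteq>A. card X \<le> card (neighbours_in E B X) + d)"

lemma bipartite_on_restrict:
  assumes "finite A" "finite B" "A \<inter> B = {}" "bipartite_on A B E" "A' \<subseteq> A" "B' \<subseteq> B"
  shows "finite A'" "finite B'" "A' \<inter> B' = {}" "bipartite_on A' B' (edges_within E (A' \<union> B'))"
proof -
  show "finite A'" "finite B'" "A' \<inter> B' = {}" using assms(1-3,5,6) finite_subset by auto
  show "bipartite_on A' B' (edges_within E (A' \<union> B'))"
    unfolding bipartite_on_def
  proof
    fix e assume "e \<in> edges_within E (A' \<union> B')"
    then have "e \<in> E" "e \<subseteq> A' \<union> B'" unfolding edges_within_def by auto
    obtain a b where ab: "a \<in> A" "b \<in> B" "e = {a, b}"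
      using assms(4) \<open>e \<in> E\<close> unfolding bipartite_on_def by blast
    have "a \<notin> B'" "b \<notin> A'" using ab(1,2) assms(3,5,6) by auto
    then have "a \<in> A'" "b \<in> B'" using ab(3) \<open>e \<subseteq> A' \<union> B'\<close> by auto
    then show "\<exists>a\<in>A'. \<exists>b\<in>B'. e = {a, b}" using ab(3) by blast
  qed
qed

lemma finite_bipartite_on_edges:
  assumes "finite A" "finite B" "bipartite_on A B E"
  shows "finite E"
proof -
  have "E \<subseteq> (\<lambda>(a, b). {a, b}) ` (A \<times> B)"
    using assms(3) unfolding bipartite_on_def by force
  then show ?thesis using assms(1,2) finite_subset by blast
qed

lemma neighbours_in_subset: "neighbours_in E B X \<subseteq> B"
  unfolding neighbours_in_def by blast

lemma finite_neighbours_in: "finite B \<Longrightarrow> finite (neighbours_in E B X)"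
  using neighbours_in_subset finite_subset by metis

lemma is_matching_edges_within_union:
  assumes M1: "is_matching (edges_within E S) M1" and M2: "is_matching (edges_within E T) M2"
    and "S \<inter> T = {}" "{} \<notin> E" "finite E"
  shows "is_matching E (M1 \<union> M2)" "card (M1 \<union> M2) = card M1 + card M2"
proof -
  have sub: "M1 \<subseteq> E" "M2 \<subseteq> E" "\<forall>e\<in>M1. e \<subseteq> S" "\<forall>e\<in>M2. e \<subseteq> T"
    using M1 M2 unfolding is_matching_def edges_within_def by auto
  have cross: "e \<inter> f = {}" if "e \<in> M1" "f \<in> M2" for e f
  proof -
    have "e \<subseteq> S" "f \<subseteq> T" using that sub(3,4) by auto
    then show ?thesis using assms(3) by blast
  qed
  have "\<forall>e\<in>M1 \<union> M2. \<forall>f\<in>M1 \<union> M2. e \<noteq> f \<longrightarrow> e \<inter> f = {}"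
    using M1 M2 cross unfolding is_matching_def by (metis Int_commute Un_iff)
  then show "is_matching E (M1 \<union> M2)" using sub(1,2) unfolding is_matching_def by simp
  have "M1 \<inter> M2 = {}"
  proof (rule ccontr)
    assume "M1 \<inter> M2 \<noteq> {}"
    then obtain e where "e \<in> M1" "e \<in> M2" by blast
    then show False using cross[of e e] sub(1) assms(4) by auto
  qed
  then show "card (M1 \<union> M2) = card M1 + card M2"
    using sub(1,2) assms(5) by (intro card_Un_disjoint) (auto intro: finite_subset)
qed

lemma hall_with_deficiency_tight_part:
  assumes "hall_with_deficiency E A B d" "X0 \<subseteq> A"
  defines "N \<equiv> neighbours_in E B X0"
  shows "hall_with_deficiency (edges_within E (X0 \<union> N)) X0 N d"
  unfolding hall_with_deficiency_def
proof (intro allI impI)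
  fix Y assume "Y \<subseteq> X0"
  then have "neighbours_in (edges_within E (X0 \<union> N)) N Y = neighbours_in E B Y"
    unfolding N_def neighbours_in_def edges_within_def by auto
  then show "card Y \<le> card (neighbours_in (edges_within E (X0 \<union> N)) N Y) + d"
    using assms(1,2) \<open>Y \<subseteq> X0\<close> unfolding hall_with_deficiency_def by auto
qed

lemma hall_with_deficiency_complement_of_tight:
  assumes "hall_with_deficiency E A B d" "X0 \<subseteq> A" "finite A" "finite B"
  defines "N \<equiv> neighbours_in E B X0"
  assumes tight: "card X0 = card N + d"
  shows "hall_with_deficiency (edges_within E ((A - X0) \<union> (B - N))) (A - X0) (B - N) 0"
  unfolding hall_with_deficiency_def
proof (intro allI impI)
  fix Y assume Y: "Y \<subseteq> A - X0"
  let ?N' = "neighbours_in (edges_within E ((A - X0) \<union> (B - N))) (B - N) Y"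
  have "neighbours_in E B (Y \<union> X0) \<subseteq> ?N' \<union> N"
    using Y unfolding N_def neighbours_in_def edges_within_def by auto
  then have "card (neighbours_in E B (Y \<union> X0)) \<le> card (?N' \<union> N)"
    using assms(4) by (intro card_mono) (auto intro: finite_neighbours_in simp: N_def)
  also have "\<dots> \<le> card ?N' + card N" by (rule card_Un_le)
  moreover have "Y \<union> X0 \<subseteq> A" using Y assms(2) by blast
  then have "card (Y \<union> X0) \<le> card (neighbours_in E B (Y \<union> X0)) + d"
    using assms(1) unfolding hall_with_deficiency_def by blast
  moreover have "card (Y \<union> X0) = card Y + card X0"
    using Y assms(2,3) by (intro card_Un_disjoint) (auto intro: finite_subset)
  ultimately show "card Y \<le> card ?N' + 0" using tight by linarith
qed

lemma hall_with_deficiency_remove_edge: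
  assumes "hall_with_deficiency E A B d" "finite B" "a \<in> A"
    and no_tight: "\<forall>X. X \<noteq> {} \<and> X \<subset> A \<longrightarrow> card X \<noteq> card (neighbours_in E B X) + d"
  shows "hall_with_deficiency (edges_within E ((A - {a}) \<union> (B - {b}))) (A - {a}) (B - {b}) d"
  unfolding hall_with_deficiency_def
proof (intro allI impI)
  fix X assume X: "X \<subseteq> A - {a}"
  let ?N' = "neighbours_in (edges_within E ((A - {a}) \<union> (B - {b}))) (B - {b}) X"
  show "card X \<le> card ?N' + d"
  proof (cases "X = {}")
    case False
    with X assms(3) have "X \<noteq> {} \<and> X \<subset> A" by blast
    with assms(1) no_tight have "card X < card (neighbours_in E B X) + d"
      unfolding hall_with_deficiency_def by (meson le_neq_implies_less psubset_imp_subset)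
    moreover have "neighbours_in E B X - {b} \<subseteq> ?N'"
      using X unfolding neighbours_in_def edges_within_def by auto
    then have "card (neighbours_in E B X - {b}) \<le> card ?N'"
      using assms(2) by (intro card_mono) (auto intro: finite_neighbours_in)
    moreover have "card (neighbours_in E B X) - 1 \<le> card (neighbours_in E B X - {b})"
      using diff_card_le_card_Diff[of "{b}" "neighbours_in E B X"] by simp
    ultimately show ?thesis by linarith
  qed simp
qed

text \<open>Induction on |A|: if some nonempty proper X \<subset> A is tight, match X into N(X) and
  A - X into B - N(X) separately; otherwise any edge {a, b} can be matched and its ends removed.\<close>

theorem deficient_hall:
  assumes "finite A" "finite B" "A \<inter> B = {}" "bipartite_on A B E" "hall_with_deficiency E A B d"
  shows "\<exists>M. is_matching E M \<and> card A \<le> card M + d"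
  using assms
proof (induction "card A" arbitrary: A B E d rule: less_induct)
  case less
  note fin = less.prems(1,2) and disj = less.prems(3) and bip = less.prems(4)
    and hall = less.prems(5)
  have IH: "\<exists>M. is_matching (edges_within E (A' \<union> B')) M \<and> card A' \<le> card M + d'"
    if "A' \<subseteq> A" "B' \<subseteq> B" "card A' < card A" "hall_with_deficiency (edges_within E (A' \<union> B')) A' B' d'"
    for A' B' d'
    using less.hyps[OF that(3) bipartite_on_restrict[OF fin disj bip that(1,2)] that(4)] .
  have E: "finite E" "{} \<notin> E"
    using finite_bipartite_on_edges[OF fin bip] bip unfolding bipartite_on_def by auto
  consider (tight) X0 where "X0 \<noteq> {}" "X0 \<subset> A" "card X0 = card (neighbours_in E B X0) + d"
    | (small) "card A \<le> d"
    | (loose) "\<forall>X. X \<noteq> {} \<and> X \<subset> A \<longrightarrow> card X \<noteq> card (neighbours_in E B X) + d"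
        "d < card A"
    by (meson not_le)
  then show ?case
  proof cases
    case tight
    define N where "N = neighbours_in E B X0"
    have X0: "X0 \<subseteq> A" "finite X0" using tight(2) fin(1) finite_subset by auto
    have "N \<subseteq> B" unfolding N_def by (rule neighbours_in_subset)
    obtain M1 where M1: "is_matching (edges_within E (X0 \<union> N)) M1" "card X0 \<le> card M1 + d"
      using IH[OF X0(1) \<open>N \<subseteq> B\<close> psubset_card_mono[OF fin(1) tight(2)]
          hall_with_deficiency_tight_part[OF hall X0(1), folded N_def]] by blast
    have "card (A - X0) < card A" using tight(1,2) fin(1) by (intro psubset_card_mono) auto
    then obtain M2 where
      M2: "is_matching (edges_within E ((A - X0) \<union> (B - N))) M2" "card (A - X0) \<le> card M2 + 0"
      using IH[of "A - X0" "B - N" 0] hall_with_deficiency_complement_of_tight[OF hall X0(1) fin]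
        tight(3) unfolding N_def by blast
    have "(X0 \<union> N) \<inter> ((A - X0) \<union> (B - N)) = {}" using X0(1) \<open>N \<subseteq> B\<close> disj by blast
    note union = is_matching_edges_within_union[OF M1(1) M2(1) this E(2,1)]
    have "card A = card X0 + card (A - X0)" using X0 fin(1) by (simp add: card_Diff_subset card_mono)
    then show ?thesis using union M1(2) M2(2) by (intro exI[of _ "M1 \<union> M2"]) auto
  next
    case small
    have "is_matching E {}" unfolding is_matching_def by simp
    then show ?thesis using small by fastforce
  next
    case loose
    have "card A \<le> card (neighbours_in E B A) + d"
      using hall unfolding hall_with_deficiency_def by blast
    then have "neighbours_in E B A \<noteq> {}" using loose(2) by auto
    then obtain a b where ab: "a \<in> A" "b \<in> B" "{a, b} \<in> E"
      unfolding neighbours_in_def by blast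
    obtain M where M: "is_matching (edges_within E ((A - {a}) \<union> (B - {b}))) M" "card (A - {a}) \<le> card M + d"
      using IH[OF _ _ card_Diff1_less[OF fin(1) ab(1)]
          hall_with_deficiency_remove_edge[OF hall fin(2) ab(1) loose(1)]] by blast
    have edge: "is_matching (edges_within E {a, b}) {{a, b}}"
      using ab(3) unfolding is_matching_def edges_within_def by simp
    have "{a, b} \<inter> ((A - {a}) \<union> (B - {b})) = {}" using ab(1,2) disj by blast
    note union = is_matching_edges_within_union[OF edge M(1) this E(2,1)]
    have "card A = card (A - {a}) + 1" using ab(1) fin(1) by (metis card_Suc_Diff1 Suc_eq_plus1)
    then show ?thesis using union M(2) by (intro exI[of _ "{{a, b}} \<union> M"]) auto
  qed
qed

text \<open>With d the maximal deficiency |X| - |N(X)|, attained at X0, the deficient Hall theorem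
  gives a matching of size |A| - d, and (A - X0) \<union> N(X0) is a cover of that size.\<close>

theorem koenig:
  assumes fin: "finite A" "finite B" and disj: "A \<inter> B = {}" and bip: "bipartite_on A B E"
  shows "\<exists>M C. is_matching E M \<and> C \<subseteq> A \<union> B \<and> (\<forall>e\<in>E. e \<inter> C \<noteq> {}) \<and> card C \<le> card M"
proof -
  define deficiency where "deficiency X = int (card X) - int (card (neighbours_in E B X))" for X
  have "finite (deficiency ` Pow A)" using fin(1) by simp
  then have "Max (deficiency ` Pow A) \<in> deficiency ` Pow A" by (rule Max_in) blast
  then obtain X0 where X0: "X0 \<subseteq> A" "deficiency X0 = Max (deficiency ` Pow A)" by auto
  have max: "deficiency X \<le> deficiency X0" if "X \<subseteq> A" for X
    using X0(2) Max_ge[OF \<open>finite (deficiency ` Pow A)\<close>] that by simp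
  define d where "d = nat (deficiency X0)"
  have "deficiency {} = 0" unfolding deficiency_def neighbours_in_def by simp
  then have d: "int d = deficiency X0" unfolding d_def using max[of "{}"] by simp
  have "hall_with_deficiency E A B d"
    unfolding hall_with_deficiency_def
  proof (intro allI impI)
    fix X assume "X \<subseteq> A"
    then show "card X \<le> card (neighbours_in E B X) + d"
      using max[of X] d unfolding deficiency_def by linarith
  qed
  then obtain M where M: "is_matching E M" "card A \<le> card M + d"
    using deficient_hall[OF fin disj bip] by blast
  define C where "C = (A - X0) \<union> neighbours_in E B X0"
  have "e \<inter> C \<noteq> {}" if "e \<in> E" for e
  proof -
    obtain a b where "a \<in> A" "b \<in> B" "e = {a, b}" using bip \<open>e \<in> E\<close> unfolding bipartite_on_def by blast
    then show ?thesis using \<open>e \<in> E\<close> unfolding C_def neighbours_in_def by (cases "a \<in> X0") auto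
  qed
  moreover have "card C \<le> card M"
  proof -
    have "card C \<le> card (A - X0) + card (neighbours_in E B X0)"
      unfolding C_def by (rule card_Un_le)
    also have "card (A - X0) = card A - card X0"
      by (rule card_Diff_subset[OF finite_subset[OF X0(1) fin(1)] X0(1)])
    finally show ?thesis using M(2) d card_mono[OF fin(1) X0(1)] unfolding deficiency_def by linarith
  qed
  moreover have "C \<subseteq> A \<union> B" unfolding C_def using neighbours_in_subset[of E B X0] by blast
  ultimately show ?thesis using M(1) by (intro exI[of _ M] exI[of _ C]) blast
qed

lemma inj_on_matching_choice:
  assumes "is_matching E M" "\<forall>e\<in>M. g e \<in> e"
  shows "inj_on g M"
proof (rule inj_onI)
  fix e f assume "e \<in> M" "f \<in> M" "g e = g f"
  then have "g e \<in> e \<inter> f" using assms(2) by (metis IntI)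
  then show "e = f" using assms(1) \<open>e \<in> M\<close> \<open>f \<in> M\<close> unfolding is_matching_def by blast
qed

lemma matching_transversal:
  assumes "is_matching E M" "\<forall>e\<in>E. e \<inter> C \<noteq> {}"
  obtains g where "inj_on g M" "\<forall>e\<in>M. g e \<in> e \<inter> C"
proof
  define g where "g e = (SOME c. c \<in> e \<inter> C)" for e
  show g: "\<forall>e\<in>M. g e \<in> e \<inter> C"
  proof
    fix e assume "e \<in> M"
    then have "e \<inter> C \<noteq> {}" using assms unfolding is_matching_def by blast
    then obtain c where "c \<in> e \<inter> C" by blast
    then show "g e \<in> e \<inter> C" unfolding g_def by (rule someI)
  qed
  then show "inj_on g M" using inj_on_matching_choice[OF assms(1)] by blast
qed

lemma card_matching_le_cover:
  assumes "is_matching E M" "\<forall>e\<in>E. e \<inter> C \<noteq> {}" "finite C"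
  shows "card M \<le> card C"
proof -
  obtain g where g: "inj_on g M" "\<forall>e\<in>M. g e \<in> e \<inter> C"
    using matching_transversal[OF assms(1,2)] .
  have "g ` M \<subseteq> C" using g(2) by blast
  then show ?thesis by (rule card_inj_on_le[OF g(1) _ assms(3)])
qed

lemma matching_number_eq_vertex_cover_number:
  assumes V: "finite V" and M: "is_matching E M" and C: "is_vertex_cover V E C"
    and "card C \<le> card M"
  shows "matching_number E = card M" "vertex_cover_number V E = card M"
proof -
  have le: "card M' \<le> card C'" if "is_matching E M'" "is_vertex_cover V E C'" for M' C'
  proof (rule card_matching_le_cover[OF that(1)])
    show "\<forall>e\<in>E. e \<inter> C' \<noteq> {}" "finite C'"
      using that(2) finite_subset[OF _ V] unfolding is_vertex_cover_def by auto
  qed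
  have CM: "card C = card M" using le[OF M C] assms(4) by simp
  have "{card M' |M'. is_matching E M'} \<subseteq> {..card C}" using le[OF _ C] by auto
  then show "matching_number E = card M"
    unfolding matching_number_def using le[OF _ C] CM M
    by (intro Max_eqI) (auto intro: finite_subset)
  have "{card C' |C'. is_vertex_cover V E C'} \<subseteq> {..card V}"
    using V unfolding is_vertex_cover_def by (auto intro: card_mono)
  then show "vertex_cover_number V E = card M"
    unfolding vertex_cover_number_def using le[OF M] CM[symmetric] C
    by (intro Min_eqI) (auto intro: finite_subset)
qed

section \<open>Fractional matchings\<close>

lemma sum_le_sum_over_cover:
  fixes h :: "'a set \<Rightarrow> real"
  assumes "finite F" "finite W" "\<forall>f\<in>F. f \<inter> W \<noteq> {}" "\<forall>f\<in>F. 0 \<le> h f"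
  shows "(\<Sum>f\<in>F. h f) \<le> (\<Sum>w\<in>W. \<Sum>f\<in>{f\<in>F. w \<in> f}. h f)"
proof -
  have "(\<Sum>f\<in>F. h f) \<le> (\<Sum>f\<in>F. real (card {w\<in>W. w \<in> f}) * h f)"
  proof (rule sum_mono)
    fix f assume "f \<in> F"
    then have "{w\<in>W. w \<in> f} \<noteq> {}" using assms(3) by blast
    then have "1 \<le> card {w\<in>W. w \<in> f}" using assms(2) by (simp add: Suc_le_eq card_gt_0_iff)
    then show "h f \<le> real (card {w\<in>W. w \<in> f}) * h f"
      using assms(4) \<open>f \<in> F\<close> mult_right_mono[of 1 _ "h f"] by simp
  qed
  also have "\<dots> = (\<Sum>w\<in>W. \<Sum>f\<in>{f\<in>F. w \<in> f}. h f)"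
    using sum.swap_restrict[OF assms(1,2), of "\<lambda>f w. h f" "\<lambda>f w. w \<in> f"] by simp
  finally show ?thesis .
qed

lemma fractional_matching_le_cover:
  fixes x :: "'a set \<Rightarrow> real"
  assumes "finite E" "finite C" "\<forall>e\<in>E. 0 \<le> x e" "\<forall>c\<in>C. (\<Sum>e\<in>{e\<in>E. c \<in> e}. x e) \<le> 1"
    and "\<forall>e\<in>E. e \<inter> C \<noteq> {}"
  shows "(\<Sum>e\<in>E. x e) \<le> card C"
proof -
  have "(\<Sum>e\<in>E. x e) \<le> (\<Sum>c\<in>C. \<Sum>e\<in>{e\<in>E. c \<in> e}. x e)"
    using sum_le_sum_over_cover[OF assms(1,2,5,3)] .
  also have "\<dots> \<le> (\<Sum>c\<in>C. 1)" using assms(4) by (intro sum_mono) auto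
  finally show ?thesis by simp
qed

lemma ln_le_sum_ln_one_minus:
  fixes a :: "'b \<Rightarrow> real"
  assumes "finite S" "\<forall>i\<in>S. 0 \<le> a i \<and> a i < 1" "0 < y" "y \<le> 1 - sum a S"
  shows "ln y \<le> (\<Sum>i\<in>S. ln (1 - a i))"
proof -
  have "y \<le> (\<Prod>i\<in>S. 1 - a i)"
    using assms(2,4) Weierstrass_prod_ineq[of S a] by fastforce
  moreover have "0 < (\<Prod>i\<in>S. 1 - a i)" using assms(2) by (intro prod_pos) auto
  ultimately have "ln y \<le> ln (\<Prod>i\<in>S. 1 - a i)" using assms(3) by simp
  also have "\<dots> = (\<Sum>i\<in>S. ln (1 - a i))" using assms(1,2) by (intro ln_prod) auto
  finally show ?thesis .
qed

lemma mult_ln_ge_minus_one: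
  fixes t :: real
  assumes "0 < t"
  shows "-1 \<le> t * ln t"
proof -
  have "ln (1 / t) \<le> 1 / t - 1" using assms by (intro ln_le_minus_one) simp
  then have "- ln t \<le> 1 / t - 1" using assms by (simp add: ln_div)
  then have "t * (- ln t) \<le> t * (1 / t - 1)" using assms by (intro mult_left_mono) auto
  then show ?thesis using assms by (simp add: algebra_simps)
qed

lemma incident_edges_of_matching_edge:
  assumes "is_matching E M" "e \<in> M" "c \<in> e"
  shows "{f\<in>E. c \<in> f} = insert e {f\<in>E - M. c \<in> f}"
  using assms unfolding is_matching_def by blast

text \<open>Bound ln (x e) for e \<in> M by T (g e) and ln (P v) for unmatched v by T v, where T w is the sum
  of ln (1 - x f) over the unmatched edges f at w; then use that every unmatched edge meets the
  cover g ` M and that all these logarithms are negative.\<close>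

lemma matching_cover_log_inequality:
  fixes x :: "'a set \<Rightarrow> real" and P :: "'a \<Rightarrow> real"
  assumes V: "finite V" "\<forall>e\<in>E. e \<subseteq> V"
    and x: "\<forall>e\<in>E. 0 < x e \<and> x e < 1"
    and P: "\<forall>v\<in>V. 0 < P v" "\<forall>v\<in>V. P v = 1 - (\<Sum>e\<in>{e\<in>E. v \<in> e}. x e)"
    and M: "is_matching E M" and g: "\<forall>e\<in>M. g e \<in> e" and cover: "\<forall>f\<in>E. f \<inter> g ` M \<noteq> {}"
  shows "(\<Sum>e\<in>M. ln (x e)) + (\<Sum>v\<in>V - \<Union>M. ln (P v)) \<le> (\<Sum>f\<in>E - M. ln (1 - x f))"
proof -
  define T where "T w = (\<Sum>f\<in>{f\<in>E - M. w \<in> f}. ln (1 - x f))" for w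
  have E: "finite E" using V finite_subset[of E "Pow V"] by auto
  have M_sub: "M \<subseteq> E" using M unfolding is_matching_def by simp
  have T_bound: "ln y \<le> T w" if "0 < y" "y \<le> 1 - (\<Sum>f\<in>{f\<in>E - M. w \<in> f}. x f)" for y w
    unfolding T_def using that x E by (intro ln_le_sum_ln_one_minus) auto
  have matched: "ln (x e) \<le> T (g e)" if "e \<in> M" for e
  proof -
    have "g e \<in> V" using g V(2) M_sub that by blast
    moreover have "(\<Sum>f\<in>{f\<in>E. g e \<in> f}. x f) = x e + (\<Sum>f\<in>{f\<in>E - M. g e \<in> f}. x f)"
      unfolding incident_edges_of_matching_edge[OF M that g[rule_format, OF that]]
      using E that by (intro sum.insert) auto
    moreover have "0 < P (g e)" "P (g e) = 1 - (\<Sum>f\<in>{f\<in>E. g e \<in> f}. x f)"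
      using P \<open>g e \<in> V\<close> by auto
    ultimately have "x e + (\<Sum>f\<in>{f\<in>E - M. g e \<in> f}. x f) < 1" by linarith
    then show ?thesis using x M_sub that by (intro T_bound) auto
  qed
  have unmatched: "ln (P v) \<le> T v" if "v \<in> V - \<Union>M" for v
  proof -
    have "{f\<in>E. v \<in> f} = {f\<in>E - M. v \<in> f}" using that by blast
    then show ?thesis using P that by (intro T_bound) auto
  qed
  have inj: "inj_on g M" by (rule inj_on_matching_choice[OF M g])
  define W where "W = g ` M \<union> (V - \<Union>M)"
  have "(\<Sum>e\<in>M. ln (x e)) \<le> (\<Sum>e\<in>M. T (g e))" using matched by (rule sum_mono)
  also have "\<dots> = (\<Sum>w\<in>g ` M. T w)" by (simp add: sum.reindex[OF inj])
  finally have "(\<Sum>e\<in>M. ln (x e)) + (\<Sum>v\<in>V - \<Union>M. ln (P v)) \<le> (\<Sum>w\<in>g ` M. T w) + (\<Sum>v\<in>V - \<Union>M. T v)"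
    using sum_mono[of "V - \<Union>M" "\<lambda>v. ln (P v)" T] unmatched by fastforce
  also have "\<dots> = (\<Sum>w\<in>W. T w)"
    unfolding W_def using g V(1) finite_subset[OF M_sub E] by (intro sum.union_disjoint[symmetric]) auto
  also have "\<dots> \<le> (\<Sum>f\<in>E - M. ln (1 - x f))"
  proof -
    have "finite W" unfolding W_def using V(1) finite_subset[OF M_sub E] by simp
    moreover have "\<forall>f\<in>E - M. f \<inter> W \<noteq> {}" using cover unfolding W_def by blast
    moreover have "\<forall>f\<in>E - M. 0 \<le> - ln (1 - x f)" using x by auto
    ultimately have "(\<Sum>f\<in>E - M. - ln (1 - x f)) \<le> (\<Sum>w\<in>W. \<Sum>f\<in>{f\<in>E - M. w \<in> f}. - ln (1 - x f))"
      using E by (intro sum_le_sum_over_cover) auto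
    then show ?thesis unfolding T_def by (simp add: sum_negf)
  qed
  finally show ?thesis .
qed

lemma sum_edges_swap:
  assumes "finite V" "finite E" "\<forall>e\<in>E. e \<subseteq> V"
  shows "(\<Sum>e\<in>E. \<Sum>w\<in>e. h e w) = (\<Sum>w\<in>V. \<Sum>e\<in>{e\<in>E. w \<in> e}. h e w)"
proof -
  have "{w\<in>V. w \<in> e} = e" if "e \<in> E" for e using assms(3) that by blast
  then have "(\<Sum>e\<in>E. \<Sum>w\<in>e. h e w) = (\<Sum>e\<in>E. \<Sum>w\<in>{w\<in>V. w \<in> e}. h e w)" by simp
  also have "\<dots> = (\<Sum>w\<in>V. \<Sum>e\<in>{e\<in>E. w \<in> e}. h e w)"
    using sum.swap_restrict[OF assms(2,1)] by simp
  finally show ?thesis .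
qed

lemma sum_edges_log_identity:
  fixes x :: "'a set \<Rightarrow> real" and P :: "'a \<Rightarrow> real" and L :: real
  assumes V: "finite V" "\<forall>e\<in>E. e \<subseteq> V"
    and P: "\<forall>v\<in>V. P v = 1 - (\<Sum>e\<in>{e\<in>E. v \<in> e}. x e)"
    and rel: "\<forall>e\<in>E. ln (x e) + ln (1 - x e) = L + (\<Sum>w\<in>e. ln (P w))"
  shows "(\<Sum>e\<in>E. x e * (ln (x e) + ln (1 - x e))) = L * (\<Sum>e\<in>E. x e) + (\<Sum>v\<in>V. (1 - P v) * ln (P v))"
proof -
  have E: "finite E" using V finite_subset[of E "Pow V"] by auto
  have "x e * (ln (x e) + ln (1 - x e)) = L * x e + (\<Sum>w\<in>e. x e * ln (P w))" if "e \<in> E" for e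
    using rel that by (simp add: distrib_left sum_distrib_left mult.commute)
  then have "(\<Sum>e\<in>E. x e * (ln (x e) + ln (1 - x e)))
      = (\<Sum>e\<in>E. L * x e) + (\<Sum>e\<in>E. \<Sum>w\<in>e. x e * ln (P w))"
    by (simp add: sum.distrib)
  also have "(\<Sum>e\<in>E. \<Sum>w\<in>e. x e * ln (P w)) = (\<Sum>w\<in>V. \<Sum>e\<in>{e\<in>E. w \<in> e}. x e * ln (P w))"
    by (rule sum_edges_swap[OF V(1) E V(2)])
  also have "\<dots> = (\<Sum>v\<in>V. (1 - P v) * ln (P v))"
    using P by (intro sum.cong refl) (simp add: sum_distrib_right[symmetric])
  finally show ?thesis by (simp add: sum_distrib_left)
qed

lemma sum_matching_log_identity:
  fixes x :: "'a set \<Rightarrow> real" and P :: "'a \<Rightarrow> real" and L :: real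
  assumes M: "is_matching E M" "\<forall>e\<in>M. finite e"
    and rel: "\<forall>e\<in>E. ln (x e) + ln (1 - x e) = L + (\<Sum>w\<in>e. ln (P w))"
  shows "(\<Sum>e\<in>M. ln (x e) + ln (1 - x e)) = L * card M + (\<Sum>w\<in>\<Union>M. ln (P w))"
proof -
  have "(\<Sum>e\<in>M. ln (x e) + ln (1 - x e)) = (\<Sum>e\<in>M. L + (\<Sum>w\<in>e. ln (P w)))"
    using rel M(1) unfolding is_matching_def by (intro sum.cong refl) auto
  also have "\<dots> = L * card M + (\<Sum>e\<in>M. \<Sum>w\<in>e. ln (P w))"
    by (simp add: sum.distrib)
  also have "(\<Sum>e\<in>M. \<Sum>w\<in>e. ln (P w)) = (\<Sum>w\<in>\<Union>M. ln (P w))"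
  proof -
    have "(\<Sum>w\<in>\<Union>M. ln (P w)) = (sum \<circ> sum) (\<lambda>w. ln (P w)) M"
      using M unfolding is_matching_def by (intro sum.Union_disjoint) auto
    then show ?thesis by simp
  qed
  finally show ?thesis .
qed

text \<open>Subtracting the identity for M from the one for E leaves, besides entropy terms bounded
  by t ln t \<ge> -1 and (1 - x) ln (1 - x) \<le> 0, exactly the two sides of the cover inequality.\<close>

lemma log_identity_weights_lower_bound:
  fixes x :: "'a set \<Rightarrow> real" and P :: "'a \<Rightarrow> real" and L :: real
  assumes V: "finite V" "\<forall>e\<in>E. e \<subseteq> V"
    and x: "\<forall>e\<in>E. 0 < x e \<and> x e < 1"
    and P: "\<forall>v\<in>V. 0 < P v" "\<forall>v\<in>V. P v = 1 - (\<Sum>e\<in>{e\<in>E. v \<in> e}. x e)"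
    and rel: "\<forall>e\<in>E. ln (x e) + ln (1 - x e) = L + (\<Sum>w\<in>e. ln (P w))"
    and M: "is_matching E M" and g: "\<forall>e\<in>M. g e \<in> e" and cover: "\<forall>f\<in>E. f \<inter> g ` M \<noteq> {}"
  shows "- (real (card E) + real (card V)) \<le> L * ((\<Sum>e\<in>E. x e) - card M)"
proof -
  have E: "finite E" using V finite_subset[of E "Pow V"] by auto
  have M_sub: "M \<subseteq> E" using M unfolding is_matching_def by simp
  have "\<forall>e\<in>M. finite e" using M_sub V(2) finite_subset[OF _ V(1)] by blast
  note identities = sum_edges_log_identity[OF V P(2) rel] sum_matching_log_identity[OF M this rel]
  have "(\<Sum>e\<in>E. -1) \<le> (\<Sum>e\<in>E. x e * ln (x e))"
    using x by (intro sum_mono mult_ln_ge_minus_one) auto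
  moreover have "(\<Sum>v\<in>V. -1) \<le> (\<Sum>v\<in>V. P v * ln (P v))"
    using P(1) by (intro sum_mono mult_ln_ge_minus_one) auto
  moreover have "(\<Sum>e\<in>E. (1 - x e) * ln (1 - x e)) \<le> 0"
    using x by (intro sum_nonpos mult_nonneg_nonpos) auto
  moreover have "(\<Sum>e\<in>M. ln (x e)) + (\<Sum>v\<in>V - \<Union>M. ln (P v)) \<le> (\<Sum>f\<in>E - M. ln (1 - x f))"
    by (rule matching_cover_log_inequality[OF V x P M g cover])
  moreover have "(\<Sum>e\<in>E. ln (1 - x e)) = (\<Sum>e\<in>M. ln (1 - x e)) + (\<Sum>e\<in>E - M. ln (1 - x e))"
    using sum.subset_diff[OF M_sub E, of "\<lambda>e. ln (1 - x e)"] by linarith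
  moreover have "(\<Sum>v\<in>V. ln (P v)) = (\<Sum>v\<in>\<Union>M. ln (P v)) + (\<Sum>v\<in>V - \<Union>M. ln (P v))"
  proof -
    have "\<Union>M \<subseteq> V" using M_sub V(2) by blast
    then show ?thesis using sum.subset_diff[of "\<Union>M" V "\<lambda>v. ln (P v)"] V(1) by linarith
  qed
  moreover have "(\<Sum>e\<in>E. x e * (ln (x e) + ln (1 - x e)))
      = (\<Sum>e\<in>E. x e * ln (x e)) + (\<Sum>e\<in>E. ln (1 - x e)) - (\<Sum>e\<in>E. (1 - x e) * ln (1 - x e))"
    by (simp add: algebra_simps sum.distrib sum_subtractf)
  moreover have "(\<Sum>e\<in>M. ln (x e) + ln (1 - x e)) = (\<Sum>e\<in>M. ln (x e)) + (\<Sum>e\<in>M. ln (1 - x e))"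
    by (rule sum.distrib)
  moreover have "(\<Sum>v\<in>V. (1 - P v) * ln (P v)) = (\<Sum>v\<in>V. ln (P v)) - (\<Sum>v\<in>V. P v * ln (P v))"
    by (simp add: algebra_simps sum_subtractf)
  ultimately show ?thesis using identities by (simp add: right_diff_distrib)
qed

section \<open>Convergence of LABP\<close>

definition labp_update :: "'a set set \<Rightarrow> real \<Rightarrow> ('a \<Rightarrow> 'a \<Rightarrow> real) \<Rightarrow> 'a \<Rightarrow> 'a \<Rightarrow> real" where
  "labp_update E z m u v = z / (1 + (\<Sum>w\<in>nbrs E u - {v}. m w u))"

lemma labp_msg_Suc: "labp_msg E (Suc t) z = labp_update E z (labp_msg E t z)"
  by (intro ext) (simp add: labp_update_def)

declare labp_msg.simps(2) [simp del]

lemma labp_update_pos: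
  assumes "0 < z" "\<And>a b. 0 \<le> m a b"
  shows "0 < labp_update E z m u v"
proof -
  have "0 \<le> (\<Sum>w\<in>nbrs E u - {v}. m w u)" using assms(2) by (simp add: sum_nonneg)
  then show ?thesis unfolding labp_update_def using assms(1) by simp
qed

lemma labp_update_le:
  assumes "0 < z" "\<And>a b. 0 \<le> m a b"
  shows "labp_update E z m u v \<le> z"
proof -
  have "0 \<le> (\<Sum>w\<in>nbrs E u - {v}. m w u)" using assms(2) by (simp add: sum_nonneg)
  then show ?thesis unfolding labp_update_def using assms(1) by (simp add: divide_le_eq)
qed

lemma labp_update_antimono:
  assumes "0 < z" "\<And>a b. 0 \<le> p a b" "\<And>a b. p a b \<le> q a b"
  shows "labp_update E z q u v \<le> labp_update E z p u v"
proof -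
  have "0 \<le> (\<Sum>w\<in>nbrs E u - {v}. p w u)" using assms(2) by (simp add: sum_nonneg)
  moreover have "(\<Sum>w\<in>nbrs E u - {v}. p w u) \<le> (\<Sum>w\<in>nbrs E u - {v}. q w u)"
    using assms(3) by (intro sum_mono)
  ultimately show ?thesis unfolding labp_update_def using assms(1)
    by (intro divide_left_mono) auto
qed

lemma labp_msg_nonneg: "0 < z \<Longrightarrow> 0 \<le> labp_msg E t z u v"
proof (induction t arbitrary: u v)
  case (Suc t)
  then have "0 < labp_update E z (labp_msg E t z) u v" by (intro labp_update_pos)
  then show ?case unfolding labp_msg_Suc by simp
qed simp

lemma labp_msg_le: "0 < z \<Longrightarrow> labp_msg E t z u v \<le> z"
  by (cases t) (simp_all add: labp_msg_Suc labp_update_le labp_msg_nonneg)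

lemma labp_msg_Suc_antimono:
  assumes "0 < z" "\<And>u v. labp_msg E s z u v \<le> labp_msg E t z u v"
  shows "labp_msg E (Suc t) z u v \<le> labp_msg E (Suc s) z u v"
  unfolding labp_msg_Suc using assms by (intro labp_update_antimono labp_msg_nonneg)

text \<open>The update is antitone and starts from the least message 0, so the even iterates
  increase and the odd iterates decrease.\<close>

lemma labp_msg_even_mono:
  assumes "0 < z"
  shows "labp_msg E (2 * k) z u v \<le> labp_msg E (2 * Suc k) z u v"
proof (induction k arbitrary: u v)
  case 0
  show ?case using labp_msg_nonneg[OF assms] by simp
next
  case (Suc k)
  have "labp_msg E (Suc (2 * Suc k)) z u v \<le> labp_msg E (Suc (2 * k)) z u v" for u v
    using labp_msg_Suc_antimono[OF assms Suc.IH] .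
  then show ?case
    using labp_msg_Suc_antimono[OF assms, of E "Suc (2 * Suc k)" "Suc (2 * k)"] by simp
qed

lemma labp_msg_odd_antimono:
  assumes "0 < z"
  shows "labp_msg E (Suc (2 * Suc k)) z u v \<le> labp_msg E (Suc (2 * k)) z u v"
  using labp_msg_Suc_antimono[OF assms labp_msg_even_mono[OF assms]] .

definition labp_even_limit :: "'a set set \<Rightarrow> real \<Rightarrow> 'a \<Rightarrow> 'a \<Rightarrow> real" where
  "labp_even_limit E z u v = lim (\<lambda>k. labp_msg E (2 * k) z u v)"

definition labp_odd_limit :: "'a set set \<Rightarrow> real \<Rightarrow> 'a \<Rightarrow> 'a \<Rightarrow> real" where
  "labp_odd_limit E z u v = lim (\<lambda>k. labp_msg E (Suc (2 * k)) z u v)"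

lemma LIMSEQ_labp_even:
  assumes "0 < z"
  shows "(\<lambda>k. labp_msg E (2 * k) z u v) \<longlonglongrightarrow> labp_even_limit E z u v"
proof -
  have "incseq (\<lambda>k. labp_msg E (2 * k) z u v)"
    using labp_msg_even_mono[OF assms] by (intro incseq_SucI) auto
  moreover have "\<forall>k. labp_msg E (2 * k) z u v \<le> z" by (intro allI labp_msg_le[OF assms])
  ultimately obtain L where "(\<lambda>k. labp_msg E (2 * k) z u v) \<longlonglongrightarrow> L" by (rule incseq_convergent)
  then show ?thesis unfolding labp_even_limit_def by (simp add: limI)
qed

lemma LIMSEQ_labp_odd:
  assumes "0 < z"
  shows "(\<lambda>k. labp_msg E (Suc (2 * k)) z u v) \<longlonglongrightarrow> labp_odd_limit E z u v"
proof -
  have "decseq (\<lambda>k. labp_msg E (Suc (2 * k)) z u v)"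
    using labp_msg_odd_antimono[OF assms] by (intro decseq_SucI) auto
  moreover have "\<forall>k. 0 \<le> labp_msg E (Suc (2 * k)) z u v" by (intro allI labp_msg_nonneg[OF assms])
  ultimately obtain L where "(\<lambda>k. labp_msg E (Suc (2 * k)) z u v) \<longlonglongrightarrow> L" by (rule decseq_convergent)
  then show ?thesis unfolding labp_odd_limit_def by (simp add: limI)
qed

lemma labp_even_limit_nonneg: "0 < z \<Longrightarrow> 0 \<le> labp_even_limit E z u v"
  by (rule LIMSEQ_le_const[OF LIMSEQ_labp_even]) (auto intro: labp_msg_nonneg)

lemma labp_odd_limit_nonneg: "0 < z \<Longrightarrow> 0 \<le> labp_odd_limit E z u v"
  by (rule LIMSEQ_le_const[OF LIMSEQ_labp_odd]) (auto intro: labp_msg_nonneg)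

lemma labp_update_tendsto:
  assumes "\<And>w. (\<lambda>k. f k w u) \<longlonglongrightarrow> m w u" "\<And>a b. 0 \<le> m a b"
  shows "(\<lambda>k. labp_update E z (f k) u v) \<longlonglongrightarrow> labp_update E z m u v"
proof -
  have "0 \<le> (\<Sum>w\<in>nbrs E u - {v}. m w u)" using assms(2) by (simp add: sum_nonneg)
  then show ?thesis unfolding labp_update_def
    by (intro tendsto_divide tendsto_const tendsto_add tendsto_sum assms(1)) auto
qed

lemma labp_odd_limit_eq:
  assumes "0 < z"
  shows "labp_odd_limit E z u v = labp_update E z (labp_even_limit E z) u v"
proof (rule LIMSEQ_unique[OF LIMSEQ_labp_odd[OF assms]])
  show "(\<lambda>k. labp_msg E (Suc (2 * k)) z u v) \<longlonglongrightarrow> labp_update E z (labp_even_limit E z) u v"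
    unfolding labp_msg_Suc
    by (rule labp_update_tendsto[where f = "\<lambda>k. labp_msg E (2 * k) z"])
      (rule LIMSEQ_labp_even[OF assms], rule labp_even_limit_nonneg[OF assms])
qed

lemma labp_even_limit_eq:
  assumes "0 < z"
  shows "labp_even_limit E z u v = labp_update E z (labp_odd_limit E z) u v"
proof (rule LIMSEQ_unique[OF LIMSEQ_Suc[OF LIMSEQ_labp_even[OF assms]]])
  have "(\<lambda>k. labp_update E z (labp_msg E (Suc (2 * k)) z) u v)
      \<longlonglongrightarrow> labp_update E z (labp_odd_limit E z) u v"
    by (rule labp_update_tendsto[where f = "\<lambda>k. labp_msg E (Suc (2 * k)) z"])
      (rule LIMSEQ_labp_odd[OF assms], rule labp_odd_limit_nonneg[OF assms])
  then show "(\<lambda>k. labp_msg E (2 * Suc k) z u v) \<longlonglongrightarrow> labp_update E z (labp_odd_limit E z) u v"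
    by (simp add: labp_msg_Suc)
qed

lemma labp_update_cong:
  assumes "\<And>w. {w, u} \<in> E \<Longrightarrow> p w u = q w u"
  shows "labp_update E z p u v = labp_update E z q u v"
proof -
  have "(\<Sum>w\<in>nbrs E u - {v}. p w u) = (\<Sum>w\<in>nbrs E u - {v}. q w u)"
    using assms unfolding nbrs_def by (intro sum.cong) (auto simp: insert_commute)
  then show ?thesis unfolding labp_update_def by simp
qed

lemma finite_dir_edges: "finite E \<Longrightarrow> \<forall>e\<in>E. finite e \<Longrightarrow> finite (dir_edges E)"
  unfolding dir_edges_def by (rule finite_subset[of _ "\<Union>E \<times> \<Union>E"]) auto

lemma finite_nbrs: "finite E \<Longrightarrow> \<forall>e\<in>E. finite e \<Longrightarrow> finite (nbrs E u)"
  unfolding nbrs_def by (rule finite_subset[of _ "\<Union>E"]) auto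

text \<open>At a directed edge where the ratio a/b is maximal, say equal to r, the fixed point
  equations give a/b = (1 + \<Sigma>a)/(1 + \<Sigma>b) with \<Sigma>a \<le> r \<Sigma>b over the incoming edges, which is
  less than r as soon as r > 1.\<close>

lemma labp_swapped_fixpoints_le:
  fixes a b :: "'a \<Rightarrow> 'a \<Rightarrow> real"
  assumes z: "0 < z" and fin: "finite E" "\<forall>e\<in>E. finite e"
    and pos: "\<And>u v. {u, v} \<in> E \<Longrightarrow> 0 < a u v \<and> 0 < b u v"
    and a: "\<And>u v. {u, v} \<in> E \<Longrightarrow> a u v = labp_update E z b u v"
    and b: "\<And>u v. {u, v} \<in> E \<Longrightarrow> b u v = labp_update E z a u v"
    and "{u0, v0} \<in> E"
  shows "a u0 v0 \<le> b u0 v0"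
proof (rule ccontr)
  define ratio where "ratio p = a (fst p) (snd p) / b (fst p) (snd p)" for p
  define r where "r = Max (ratio ` dir_edges E)"
  have fD: "finite (ratio ` dir_edges E)" using finite_dir_edges[OF fin] by simp
  have le_r: "ratio (w, u) \<le> r" if "{w, u} \<in> E" for w u
    unfolding r_def using that by (intro Max_ge[OF fD]) (simp add: dir_edges_def)
  have "r \<in> ratio ` dir_edges E"
    unfolding r_def using \<open>{u0, v0} \<in> E\<close> by (intro Max_in[OF fD]) (auto simp: dir_edges_def)
  then obtain u v where uv: "{u, v} \<in> E" "ratio (u, v) = r" by (auto simp: dir_edges_def)
  assume "\<not> a u0 v0 \<le> b u0 v0"
  then have "1 < ratio (u0, v0)" unfolding ratio_def using pos[OF \<open>{u0, v0} \<in> E\<close>] by simp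
  with le_r[OF \<open>{u0, v0} \<in> E\<close>] have r1: "1 < r" by linarith
  define N where "N = nbrs E u - {v}"
  have N: "{w, u} \<in> E" if "w \<in> N" for w
    using that unfolding N_def nbrs_def by (simp add: insert_commute)
  define Sa where "Sa = (\<Sum>w\<in>N. a w u)"
  define Sb where "Sb = (\<Sum>w\<in>N. b w u)"
  have "Sa \<le> (\<Sum>w\<in>N. r * b w u)"
    unfolding Sa_def using le_r N pos by (intro sum_mono) (auto simp: ratio_def divide_le_eq)
  then have Sa: "Sa \<le> r * Sb" unfolding Sb_def by (simp add: sum_distrib_left)
  have "0 \<le> Sb" unfolding Sb_def using N pos by (intro sum_nonneg) (simp add: less_imp_le)
  moreover have "0 \<le> Sa" unfolding Sa_def using N pos by (intro sum_nonneg) (simp add: less_imp_le)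
  moreover have "ratio (u, v) = (z / (1 + Sb)) / (z / (1 + Sa))"
    using a[OF uv(1)] b[OF uv(1)] unfolding ratio_def labp_update_def Sa_def Sb_def N_def by simp
  ultimately have "ratio (u, v) = (1 + Sa) / (1 + Sb)"
    using z by (simp add: divide_divide_eq_left divide_divide_eq_right)
  also have "\<dots> < r" using Sa r1 \<open>0 \<le> Sb\<close> by (simp add: divide_less_eq algebra_simps)
  finally show False using uv(2) by simp
qed

lemma labp_limits_positive:
  assumes "0 < z"
  shows "0 < labp_even_limit E z u v" "0 < labp_odd_limit E z u v"
proof -
  have "0 < labp_update E z (labp_odd_limit E z) u v"
    by (rule labp_update_pos[OF assms]) (rule labp_odd_limit_nonneg[OF assms])
  then show "0 < labp_even_limit E z u v" by (simp only: labp_even_limit_eq[OF assms])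
  have "0 < labp_update E z (labp_even_limit E z) u v"
    by (rule labp_update_pos[OF assms]) (rule labp_even_limit_nonneg[OF assms])
  then show "0 < labp_odd_limit E z u v" by (simp only: labp_odd_limit_eq[OF assms])
qed

lemma labp_even_odd_limits_eq:
  assumes z: "0 < z" and fin: "finite E" "\<forall>e\<in>E. finite e" and uv: "{u, v} \<in> E"
  shows "labp_even_limit E z u v = labp_odd_limit E z u v"
proof -
  have pos: "0 < labp_even_limit E z u v \<and> 0 < labp_odd_limit E z u v" for u v
    using labp_limits_positive[OF z, of E] by simp
  have "labp_even_limit E z u v \<le> labp_odd_limit E z u v"
    by (rule labp_swapped_fixpoints_le[OF z fin _ labp_even_limit_eq[OF z] labp_odd_limit_eq[OF z] uv])
      (use pos in blast)
  moreover have "labp_odd_limit E z u v \<le> labp_even_limit E z u v"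
    by (rule labp_swapped_fixpoints_le[OF z fin _ labp_odd_limit_eq[OF z] labp_even_limit_eq[OF z] uv])
      (use pos in blast)
  ultimately show ?thesis by simp
qed

lemma labp_Y_eq_even_limit:
  assumes "0 < z" "finite E" "\<forall>e\<in>E. finite e" "{u, v} \<in> E"
  shows "labp_Y E z u v = labp_even_limit E z u v"
proof -
  have "(\<lambda>k. labp_msg E (2 * k + 1) z u v) \<longlonglongrightarrow> labp_even_limit E z u v"
    using LIMSEQ_labp_odd[OF assms(1), of E u v] labp_even_odd_limits_eq[OF assms] by simp
  then have "(\<lambda>t. labp_msg E t z u v) \<longlonglongrightarrow> labp_even_limit E z u v"
    by (rule limseq_even_odd[OF LIMSEQ_labp_even[OF assms(1)]])
  then show ?thesis unfolding labp_Y_def by (rule limI)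
qed

lemma labp_Y_pos:
  assumes "0 < z" "finite E" "\<forall>e\<in>E. finite e" "{u, v} \<in> E"
  shows "0 < labp_Y E z u v"
  using labp_limits_positive[OF assms(1)] labp_Y_eq_even_limit[OF assms] by simp

lemma labp_Y_fixpoint:
  assumes "0 < z" "finite E" "\<forall>e\<in>E. finite e" "{u, v} \<in> E"
  shows "labp_Y E z u v = labp_update E z (labp_Y E z) u v"
proof -
  have "labp_Y E z u v = labp_update E z (labp_odd_limit E z) u v"
    using labp_Y_eq_even_limit[OF assms] labp_even_limit_eq[OF assms(1)] by simp
  also have "\<dots> = labp_update E z (labp_Y E z) u v"
    using labp_Y_eq_even_limit[OF assms(1-3)] labp_even_odd_limits_eq[OF assms(1-3)]
    by (intro labp_update_cong) simp
  finally show ?thesis .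
qed

section \<open>The LABP fixed point\<close>

definition labp_vacancy :: "'a set set \<Rightarrow> real \<Rightarrow> 'a \<Rightarrow> real" where
  "labp_vacancy E z u = 1 / (1 + (\<Sum>w\<in>nbrs E u. labp_Y E z w u))"

lemma labp_x_dir_commute: "labp_x_dir E z u v = labp_x_dir E z v u"
  unfolding labp_x_dir_def by (simp add: mult.commute)

lemma labp_x_doubleton: "labp_x E z {u, v} = labp_x_dir E z u v"
proof -
  define p where "p = (SOME p. {u, v} = {fst p, snd p})"
  have "{u, v} = {fst p, snd p}" unfolding p_def by (rule someI[of _ "(u, v)"]) simp
  then have "p = (u, v) \<or> p = (v, u)" by (cases p) (auto simp: doubleton_eq_iff)
  moreover have "labp_x E z {u, v} = labp_x_dir E z (fst p) (snd p)"
    unfolding labp_x_def p_def[symmetric] by (simp add: case_prod_beta)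
  ultimately show ?thesis using labp_x_dir_commute[of E z v u] by auto
qed

locale labp_graph =
  fixes V :: "'a set" and E :: "'a set set" and z :: real
  assumes simple: "simple_graph V E" and z_pos: "0 < z"
begin

lemma finite_V: "finite V"
  using simple unfolding simple_graph_def by simp

lemma edgeE:
  assumes "e \<in> E"
  obtains u v where "u \<in> V" "v \<in> V" "u \<noteq> v" "e = {u, v}"
  using simple assms unfolding simple_graph_def by blast

lemma edges_subset: "e \<in> E \<Longrightarrow> e \<subseteq> V"
  by (elim edgeE) auto

lemma finite_E: "finite E"
  using finite_subset[OF _ finite_Pow_iff[THEN iffD2, OF finite_V]] edges_subset by blast

lemma finite_edges: "\<forall>e\<in>E. finite e"
  using edges_subset finite_V finite_subset by blast

lemma nbrs_edge: "w \<in> nbrs E u \<longleftrightarrow> {w, u} \<in> E"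
  unfolding nbrs_def by (simp add: insert_commute)

lemma Y_pos: "{u, v} \<in> E \<Longrightarrow> 0 < labp_Y E z u v"
  by (rule labp_Y_pos[OF z_pos finite_E finite_edges])

lemma incoming_sum_nonneg: "0 \<le> (\<Sum>w\<in>nbrs E u. labp_Y E z w u)"
  using Y_pos nbrs_edge by (intro sum_nonneg) (simp add: less_imp_le)

lemma vacancy_pos: "0 < labp_vacancy E z u"
  unfolding labp_vacancy_def using incoming_sum_nonneg[of u] by simp

lemma labp_x_dir_eq:
  assumes uv: "{u, v} \<in> E"
  shows "labp_x_dir E z u v = labp_Y E z v u * labp_vacancy E z u"
proof -
  define a where "a = labp_Y E z u v"
  define b where "b = labp_Y E z v u"
  define s where "s = (\<Sum>w\<in>nbrs E u. labp_Y E z w u)"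
  have a: "0 < a" and s: "0 \<le> s" unfolding a_def s_def using Y_pos[OF uv] incoming_sum_nonneg by auto
  have "v \<in> nbrs E u" using uv nbrs_edge by (simp add: insert_commute)
  then have rest: "(\<Sum>w\<in>nbrs E u - {v}. labp_Y E z w u) = s - b"
    unfolding s_def b_def by (simp add: sum_diff1 finite_nbrs[OF finite_E finite_edges])
  have "0 \<le> (\<Sum>w\<in>nbrs E u - {v}. labp_Y E z w u)"
    using Y_pos nbrs_edge by (intro sum_nonneg) (simp add: less_imp_le)
  then have "0 < 1 + (s - b)" unfolding rest by simp
  moreover have "a = z / (1 + (s - b))"
    using labp_Y_fixpoint[OF z_pos finite_E finite_edges uv] unfolding a_def labp_update_def rest .
  ultimately have "a * (1 + (s - b)) = z" by simp
  then have "z + a * b = a * (1 + s)" by (simp add: algebra_simps)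
  then have "a * b / (z + a * b) = b / (1 + s)" using a s by simp
  then show ?thesis unfolding labp_x_dir_def labp_vacancy_def a_def b_def s_def by simp
qed

lemma labp_x_dir_bounds:
  assumes "{u, v} \<in> E"
  shows "0 < labp_x_dir E z u v" "labp_x_dir E z u v < 1"
proof -
  have vu: "{v, u} \<in> E" using assms by (simp add: insert_commute)
  have "labp_Y E z v u \<le> (\<Sum>w\<in>nbrs E u. labp_Y E z w u)"
    using vu Y_pos finite_nbrs[OF finite_E finite_edges]
    by (intro member_le_sum) (auto simp: nbrs_edge less_imp_le)
  then show "labp_x_dir E z u v < 1"
    unfolding labp_x_dir_eq[OF assms] labp_vacancy_def using incoming_sum_nonneg[of u] by simp
  show "0 < labp_x_dir E z u v"
    unfolding labp_x_dir_eq[OF assms] using Y_pos[OF vu] vacancy_pos by simp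
qed

lemma labp_x_dir_complement:
  assumes uv: "{u, v} \<in> E"
  shows "labp_x_dir E z u v * (1 - labp_x_dir E z u v) = z * labp_vacancy E z u * labp_vacancy E z v"
proof -
  have vu: "{v, u} \<in> E" using uv by (simp add: insert_commute)
  define a where "a = labp_Y E z u v"
  define b where "b = labp_Y E z v u"
  define x where "x = labp_x_dir E z u v"
  have ab: "0 < a" "0 < b" unfolding a_def b_def using Y_pos uv vu by auto
  have x: "x = a * b / (z + a * b)" unfolding x_def labp_x_dir_def a_def b_def ..
  have "x = b * labp_vacancy E z u" unfolding x_def b_def by (rule labp_x_dir_eq[OF uv])
  moreover have "x = a * labp_vacancy E z v"
    unfolding x_def a_def labp_x_dir_commute[of E z u v] by (rule labp_x_dir_eq[OF vu])
  ultimately have "labp_vacancy E z u = x / b" "labp_vacancy E z v = x / a"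
    using ab by (simp_all add: field_simps)
  moreover have "x * (1 - x) = z * (x / b) * (x / a)"
  proof -
    have q: "0 < z + a * b" using ab z_pos by (simp add: add_pos_pos)
    then have "1 - x = z / (z + a * b)" unfolding x by (simp add: field_simps)
    moreover have "x / b = a / (z + a * b)" "x / a = b / (z + a * b)" unfolding x using ab by auto
    ultimately show ?thesis unfolding x by simp
  qed
  ultimately show ?thesis unfolding x_def by simp
qed

lemma incident_edges_sum:
  "(\<Sum>e\<in>{e\<in>E. u \<in> e}. labp_x E z e) = 1 - labp_vacancy E z u"
proof -
  have "bij_betw (\<lambda>w. {u, w}) (nbrs E u) {e\<in>E. u \<in> e}"
  proof (rule bij_betwI')
    fix w w' assume "w \<in> nbrs E u" "w' \<in> nbrs E u"
    then show "({u, w} = {u, w'}) = (w = w')" by (auto simp: doubleton_eq_iff)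
  next
    fix w assume "w \<in> nbrs E u" then show "{u, w} \<in> {e\<in>E. u \<in> e}" unfolding nbrs_def by simp
  next
    fix e assume "e \<in> {e\<in>E. u \<in> e}"
    then have "e \<in> E" "u \<in> e" by auto
    then obtain w where "e = {u, w}" by (elim edgeE) auto
    then show "\<exists>w\<in>nbrs E u. e = {u, w}" using \<open>e \<in> E\<close> unfolding nbrs_def by blast
  qed
  then have "(\<Sum>e\<in>{e\<in>E. u \<in> e}. labp_x E z e) = (\<Sum>w\<in>nbrs E u. labp_x_dir E z u w)"
    by (simp add: sum.reindex_bij_betw[symmetric] labp_x_doubleton)
  also have "\<dots> = (\<Sum>w\<in>nbrs E u. labp_Y E z w u) * labp_vacancy E z u"
    by (simp add: labp_x_dir_eq nbrs_def sum_distrib_right)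
  also have "\<dots> = 1 - labp_vacancy E z u"
    unfolding labp_vacancy_def using incoming_sum_nonneg[of u] by (simp add: field_simps)
  finally show ?thesis .
qed

lemma labp_x_bounds:
  assumes "e \<in> E"
  shows "0 < labp_x E z e \<and> labp_x E z e < 1"
proof -
  obtain u v where "e = {u, v}" using assms by (elim edgeE)
  then show ?thesis using assms labp_x_dir_bounds[of u v] by (simp add: labp_x_doubleton)
qed

lemma labp_x_log_identity:
  assumes "e \<in> E"
  shows "ln (labp_x E z e) + ln (1 - labp_x E z e) = ln z + (\<Sum>w\<in>e. ln (labp_vacancy E z w))"
proof -
  obtain u v where uv: "u \<noteq> v" "e = {u, v}" using assms by (elim edgeE)
  then have "{u, v} \<in> E" and x: "labp_x E z e = labp_x_dir E z u v"
    using assms by (simp_all add: labp_x_doubleton)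
  then have "ln (labp_x E z e) + ln (1 - labp_x E z e) = ln (labp_x_dir E z u v * (1 - labp_x_dir E z u v))"
    using labp_x_dir_bounds[of u v] by (simp add: ln_mult)
  also have "\<dots> = ln z + ln (labp_vacancy E z u) + ln (labp_vacancy E z v)"
    using labp_x_dir_complement[OF \<open>{u, v} \<in> E\<close>] z_pos vacancy_pos[of u] vacancy_pos[of v]
    by (simp add: ln_mult)
  finally show ?thesis using uv by simp
qed

lemma total_weight_le_cover:
  assumes "is_vertex_cover V E C"
  shows "(\<Sum>e\<in>E. labp_x E z e) \<le> card C"
proof (rule fractional_matching_le_cover[OF finite_E])
  show "finite C" "\<forall>e\<in>E. e \<inter> C \<noteq> {}"
    using assms finite_subset[OF _ finite_V] unfolding is_vertex_cover_def by auto
  show "\<forall>e\<in>E. 0 \<le> labp_x E z e" using labp_x_bounds by (simp add: less_imp_le)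
  show "\<forall>c\<in>C. (\<Sum>e\<in>{e\<in>E. c \<in> e}. labp_x E z e) \<le> 1"
    using incident_edges_sum vacancy_pos by (simp add: less_imp_le)
qed

lemma total_weight_lower_bound:
  assumes "is_matching E M" "\<forall>e\<in>M. g e \<in> e" "is_vertex_cover V E (g ` M)"
  shows "- (real (card E) + real (card V)) \<le> ln z * ((\<Sum>e\<in>E. labp_x E z e) - card M)"
proof (rule log_identity_weights_lower_bound[where P = "labp_vacancy E z", OF finite_V _ _ _ _ _ assms(1,2)])
  show "\<forall>e\<in>E. e \<subseteq> V" using edges_subset by blast
  show "\<forall>f\<in>E. f \<inter> g ` M \<noteq> {}" using assms(3) unfolding is_vertex_cover_def by blast
  show "\<forall>e\<in>E. 0 < labp_x E z e \<and> labp_x E z e < 1" using labp_x_bounds by blast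
  show "\<forall>v\<in>V. 0 < labp_vacancy E z v" using vacancy_pos by blast
  show "\<forall>v\<in>V. labp_vacancy E z v = 1 - (\<Sum>e\<in>{e\<in>E. v \<in> e}. labp_x E z e)"
    using incident_edges_sum by simp
  show "\<forall>e\<in>E. ln (labp_x E z e) + ln (1 - labp_x E z e) = ln z + (\<Sum>w\<in>e. ln (labp_vacancy E z w))"
    using labp_x_log_identity by blast
qed

end

lemma total_weight_tendsto_matching:
  assumes "simple_graph V E" "is_matching E M" "\<forall>e\<in>M. g e \<in> e" "is_vertex_cover V E (g ` M)"
    and "card (g ` M) = card M"
  shows "((\<lambda>z. \<Sum>e\<in>E. labp_x E z e) \<longlongrightarrow> real (card M)) at_top"
proof (rule real_tendsto_sandwich)
  define K where "K = real (card E) + real (card V)"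
  have bounds: "card M - K / ln z \<le> (\<Sum>e\<in>E. labp_x E z e) \<and> (\<Sum>e\<in>E. labp_x E z e) \<le> card M"
    if "1 < z" for z
  proof -
    interpret labp_graph V E z using assms(1) that by unfold_locales auto
    have "0 < ln z" using that by simp
    moreover have "- K \<le> ((\<Sum>e\<in>E. labp_x E z e) - card M) * ln z"
      using total_weight_lower_bound[OF assms(2-4)] unfolding K_def by (simp add: mult.commute)
    ultimately have "- K / ln z \<le> (\<Sum>e\<in>E. labp_x E z e) - card M"
      using pos_divide_le_eq[of "ln z" "- K"] by blast
    then have "card M - K / ln z \<le> (\<Sum>e\<in>E. labp_x E z e)" by simp
    then show ?thesis using total_weight_le_cover[OF assms(4)] assms(5) by simp
  qed
  show "\<forall>\<^sub>F z in at_top. card M - K / ln z \<le> (\<Sum>e\<in>E. labp_x E z e)"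
    "\<forall>\<^sub>F z in at_top. (\<Sum>e\<in>E. labp_x E z e) \<le> card M"
    using eventually_gt_at_top[of 1] by (eventually_elim, use bounds in blast)+
  show "((\<lambda>z. real (card M) - K / ln z) \<longlongrightarrow> real (card M)) at_top"
    using tendsto_diff[OF tendsto_const tendsto_divide_0[OF tendsto_const
        filterlim_at_top_imp_at_infinity[OF ln_at_top]]] by simp
qed (rule tendsto_const)

lemma bipartite_matching_with_transversal_cover:
  assumes "simple_graph V E" "bipartite V E"
  obtains M g where "is_matching E M" "\<forall>e\<in>M. g e \<in> e" "is_vertex_cover V E (g ` M)"
    "card (g ` M) = card M"
proof -
  obtain A B where AB: "A \<union> B = V" "A \<inter> B = {}" "bipartite_on A B E"
    using assms(2) unfolding bipartite_def bipartite_on_def by blast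
  have "finite A" "finite B" using AB(1) assms(1) unfolding simple_graph_def by auto
  then obtain M C where M: "is_matching E M" and C: "C \<subseteq> V" "\<forall>e\<in>E. e \<inter> C \<noteq> {}"
    and le: "card C \<le> card M"
    using koenig[OF _ _ AB(2,3)] AB(1) by metis
  obtain g where g: "inj_on g M" "\<forall>e\<in>M. g e \<in> e \<inter> C" using matching_transversal[OF M C(2)] .
  have "finite C" using C(1) assms(1) finite_subset unfolding simple_graph_def by auto
  moreover have "g ` M \<subseteq> C" using g(2) by blast
  moreover have "card (g ` M) = card M" by (rule card_image[OF g(1)])
  ultimately have "g ` M = C" using le by (metis card_subset_eq le_antisym card_mono)
  then have "is_vertex_cover V E (g ` M)" using C unfolding is_vertex_cover_def by simp
  then show ?thesis using that M g(2) \<open>card (g ` M) = card M\<close> by blast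
qed

theorem mainTheorem4:
  fixes V :: "'a set" and E :: "'a set set"
  assumes "simple_graph V E" and "bipartite V E"
  shows "((\<lambda>z. \<Sum>e\<in>E. labp_x E z e) \<longlongrightarrow> real (matching_number E)) at_top
         \<and> matching_number E = vertex_cover_number V E"
proof -
  obtain M g where M: "is_matching E M" "\<forall>e\<in>M. g e \<in> e" and C: "is_vertex_cover V E (g ` M)"
    and card: "card (g ` M) = card M"
    using bipartite_matching_with_transversal_cover[OF assms] .
  have "finite V" using assms(1) unfolding simple_graph_def by simp
  then have "matching_number E = card M" "vertex_cover_number V E = card M"
    using matching_number_eq_vertex_cover_number[OF _ M(1) C] card by auto
  moreover have "((\<lambda>z. \<Sum>e\<in>E. labp_x E z e) \<longlongrightarrow> real (card M)) at_top"
    by (rule total_weight_tendsto_matching[OF assms(1) M C card])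
  ultimately show ?thesis by simp
qed

end
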